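(* Let $\varphi(t)=(t^{v_0},y(t))$ with $y(t)=t^{v_1}+t^\lambda+\sum_{i>\lambda}a_it^i$ be a Puiseux parametrization of genus $g\ge2$ with $n_1=2$, where $\lambda$ is the Zariski invariant of $\varphi$. Then there exists $y_1(t)=t^{v_1}+t^\lambda+\sum_{i>\lambda}a'_it^i$ with $a'_i=a_i$ for all $i<v_1+\lambda-v_0$ and $a'_{v_1+\lambda-v_0}=0$, such that $(t^{v_0},y_1(t))\sim_{\widetilde{\mathcal A}}(t^{v_0},y(t))$.
   Context: A Puiseux parametrization is a primitive parametrization $(t^{v_0},\sum_{i\ge v_1}a_it^i)$ with $a_{v_1}=1$, $v_0<v_1$, $v_0\nmid v_1$. Its semigroup of values $\Gamma_\varphi=\{\mathrm{ord}_t h(\varphi(t)): h\in\mathbb C\{X,Y\},\ h(\varphi)\ne0\}$ has minimal generators $v_0<v_1<\dots<v_g$; $g$ is the genus. $n_1=v_0/\gcd(v_0,v_1)$. For $\omega=h\,dX+g\,dY$, $v_\varphi(\omega)=\mathrm{ord}_t(h(\varphi)x'+g(\varphi)y')+1$, $\Lambda_\varphi$ is the set of these values (nonzero pull-backs), and the Zariski invariant is $\lambda=\min(\Lambda_\varphi\setminus\Gamma_\varphi)-v_0$ (assumed to exist). $\widetilde{\mathcal A}$-equivalence: $\varphi_2=\sigma\circ\varphi_1\circ\rho^{-1}$ where $\sigma$ is a germ of analytic automorphism of $(\mathbb C^2,0)$ whose 1-jet is $(X+\beta Y,Y)$ for some $\beta\in\mathbb C$, and $\rho$ a germ of analytic automorphism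 of $(\mathbb C,0)$ whose 1-jet is the identity. *)

theory Defs
  imports Complex_Main "HOL-Computational_Algebra.Formal_Power_Series"
begin

text \<open>Univariate series in t are complex formal power series; convergence
  (membership in C{t}) is a geometric bound on the coefficients.\<close>
definition conv1 :: "complex fps \<Rightarrow> bool" where
  "conv1 f \<longleftrightarrow> (\<exists>r>0. \<exists>M. \<forall>n. norm (fps_nth f n) * r ^ n \<le> M)"

text \<open>A bivariate series h = sum c i j X^i Y^j in C{X,Y} is given by its
  coefficient function c.\<close>
definition conv2 :: "(nat \<Rightarrow> nat \<Rightarrow> complex) \<Rightarrow> bool" where
  "conv2 c \<longleftrightarrow> (\<exists>r>0. \<exists>M. \<forall>i j. norm (c i j) * r ^ (i + j) \<le> M)"

text \<open>Substitution h(x(t),y(t)) for x, y without constant term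
  (only the terms with i + j \<le> n contribute to the coefficient of t^n).\<close>
definition comp2 :: "(nat \<Rightarrow> nat \<Rightarrow> complex) \<Rightarrow> complex fps \<Rightarrow> complex fps \<Rightarrow> complex fps" where
  "comp2 c x y = Abs_fps (\<lambda>n. \<Sum>i\<le>n. \<Sum>j\<le>n - i. c i j * fps_nth (x ^ i * y ^ j) n)"

definition primitive :: "complex fps \<Rightarrow> complex fps \<Rightarrow> bool" where
  "primitive x y \<longleftrightarrow>
     \<not> (\<exists>k\<ge>2. \<forall>n. \<not> k dvd n \<longrightarrow> fps_nth x n = 0 \<and> fps_nth y n = 0)"

definition puiseux_param :: "nat \<Rightarrow> nat \<Rightarrow> complex fps \<Rightarrow> bool" where
  "puiseux_param v0 v1 y \<longleftrightarrow>
     conv1 y \<and> (\<forall>i<v1. fps_nth y i = 0) \<and> fps_nth y v1 = 1 \<and> v0 < v1 \<and> \<not> v0 dvd v1 \<and>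
     primitive (fps_X ^ v0) y"

definition Gamma :: "complex fps \<Rightarrow> complex fps \<Rightarrow> nat set" where
  "Gamma x y = {subdegree (comp2 c x y) | c. conv2 c \<and> comp2 c x y \<noteq> 0}"

definition Lambda :: "complex fps \<Rightarrow> complex fps \<Rightarrow> nat set" where
  "Lambda x y = {subdegree (comp2 h x y * fps_deriv x + comp2 g x y * fps_deriv y) + 1 | h g.
       conv2 h \<and> conv2 g \<and> comp2 h x y * fps_deriv x + comp2 g x y * fps_deriv y \<noteq> 0}"

definition min_gens :: "nat set \<Rightarrow> nat set" where
  "min_gens S = {v \<in> S. v \<noteq> 0 \<and>
      \<not> (\<exists>a\<in>S. \<exists>b\<in>S. a \<noteq> 0 \<and> b \<noteq> 0 \<and> v = a + b)}"

definition genus :: "complex fps \<Rightarrow> complex fps \<Rightarrow> nat" where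
  "genus x y = card (min_gens (Gamma x y)) - 1"

definition zariski_exists :: "complex fps \<Rightarrow> complex fps \<Rightarrow> bool" where
  "zariski_exists x y \<longleftrightarrow> Lambda x y - Gamma x y \<noteq> {}"

definition zariski_inv :: "nat \<Rightarrow> complex fps \<Rightarrow> complex fps \<Rightarrow> nat" where
  "zariski_inv v0 x y = (LEAST n. n \<in> Lambda x y - Gamma x y) - v0"

text \<open>A-tilde equivalence: (x2,y2) = sigma o (x1,y1) o rho^{-1}, written
  equivalently as (x2,y2) o rho = sigma o (x1,y1); sigma has 1-jet (X + beta Y, Y),
  rho has 1-jet t; both convergent (hence analytic automorphism germs).\<close>
definition A_equiv :: "complex fps \<times> complex fps \<Rightarrow> complex fps \<times> complex fps \<Rightarrow> bool" where
  "A_equiv p q \<longleftrightarrow>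
    (\<exists>s1 s2 rho \<beta>. conv2 s1 \<and> conv2 s2 \<and> conv1 rho \<and>
       s1 0 0 = 0 \<and> s1 1 0 = 1 \<and> s1 0 1 = \<beta> \<and>
       s2 0 0 = 0 \<and> s2 1 0 = 0 \<and> s2 0 1 = 1 \<and>
       fps_nth rho 0 = 0 \<and> fps_nth rho 1 = 1 \<and>
       fst q oo rho = comp2 s1 (fst p) (snd p) \<and>
       snd q oo rho = comp2 s2 (fst p) (snd p))"

end

theory Submission
  imports Defs
begin

(* Write v0 = 2e and v1 = me with m odd (this is n1 = 2), put p = v1 - v0,
   d = v1 + lam - v0 and w = y / t^v0 = t^p + t^(p + lam - v1) + ...  Two kinds of
   coordinate changes are combined.
   (1) The reparametrisation rho = t (1 + beta w)^(1/v0) satisfies rho^v0 = t^v0 + beta y,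
       i.e. it realises the change X -> X + beta Y of the source.  Composing with rho
       leaves the coefficients of y below d unchanged except at indices of the set M of
       multiples of e that are at least 2 v1 - v0, and shifts the coefficient of t^d by
       beta (v1 + lam)/v0 when e does not divide d; so beta can be chosen to kill it
       (if e divides d, then d lies in M and is handled by (2)).
   (2) The target changes Y -> U(X) Y + V(X) with polynomials U(0) = 1, V = O(X^2)
       add terms c t^(a v0) and c t^(a v0) z to the series z; this removes one by one
       all coefficients at indices in M (every such index is a v0 or a v0 + v1). *)

unbundle fps_syntax

section \<open>Convergent power series\<close>

lemma conv1_bound: "conv1 f \<Longrightarrow> \<exists>r>0. \<exists>M\<ge>0. \<forall>n. norm (fps_nth f n) * r ^ n \<le> M"
  unfolding conv1_def
  by (metis (no_types) norm_ge_zero order_trans power_0 mult_nonneg_nonneg zero_le_power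
      less_imp_le mult.right_neutral)

lemma geometric_sum_two_le: "(\<Sum>i=0..n. (2::real) ^ (n - i)) + 1 \<le> 2 ^ Suc n"
proof (induction n)
  case 0 then show ?case by simp
next
  case (Suc n)
  have "(\<Sum>i=0..Suc n. (2::real) ^ (Suc n - i)) = (\<Sum>i=0..n. 2 ^ (Suc n - i)) + 1"
    by simp
  also have "(\<Sum>i=0..n. (2::real) ^ (Suc n - i)) = 2 * (\<Sum>i=0..n. 2 ^ (n - i))"
    by (simp add: sum_distrib_left Suc_diff_le flip: power_Suc)
  finally show ?case using Suc by simp
qed

lemma power_coeff_bound:
  fixes g :: "complex fps"
  assumes b: "b > 0" and B: "B \<ge> 0" and gb: "\<And>n. norm (g $ n) * b ^ n \<le> B"
  shows "norm ((g ^ k) $ n) * b ^ n \<le> B ^ k * 2 ^ (n + k)"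
proof (induction k arbitrary: n)
  case 0 then show ?case by simp
next
  case (Suc k)
  have "norm ((g ^ Suc k) $ n) * b ^ n = norm (\<Sum>i=0..n. g $ i * (g ^ k) $ (n - i)) * b ^ n"
    by (simp add: fps_mult_nth)
  also have "\<dots> \<le> (\<Sum>i=0..n. norm (g $ i) * norm ((g ^ k) $ (n - i))) * b ^ n"
    by (intro mult_right_mono) (auto intro: order_trans[OF norm_sum] simp: norm_mult b less_imp_le)
  also have "\<dots> = (\<Sum>i=0..n. (norm (g $ i) * b ^ i) * (norm ((g ^ k) $ (n - i)) * b ^ (n - i)))"
    by (auto simp: sum_distrib_right intro!: sum.cong simp flip: power_add)
  also have "\<dots> \<le> (\<Sum>i=0..n. B * (B ^ k * 2 ^ (n - i + k)))"
    by (intro sum_mono mult_mono gb Suc.IH) (auto simp: B b less_imp_le)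
  also have "\<dots> = B ^ Suc k * 2 ^ k * (\<Sum>i=0..n. 2 ^ (n - i))"
    by (subst sum_distrib_left, rule sum.cong, simp, simp only: power_add, simp add: mult_ac)
  also have "\<dots> \<le> B ^ Suc k * 2 ^ k * 2 ^ Suc n"
    using geometric_sum_two_le[of n] by (intro mult_left_mono) (auto simp: B)
  finally show ?case by (simp add: power_add mult_ac)
qed

lemma compose_coeff_bound:
  fixes f g :: "complex fps"
  assumes a_pos: "a > 0" and A0: "A \<ge> 0" and fa: "\<And>n. norm (f $ n) * a ^ n \<le> A"
    and b_pos: "b > 0" and B0: "B \<ge> 0" and gb: "\<And>n. norm (g $ n) * b ^ n \<le> B"
    and K: "K = max 1 (2 * B / a)"
  shows "norm ((f oo g) $ n) * (b / (4 * K)) ^ n \<le> A"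
proof -
  have K1: "K \<ge> 1" by (simp add: K)
  have fk: "norm (f $ k) \<le> A / a ^ k" for k
    using fa[of k] a_pos by (simp add: field_simps)
  have gk: "norm ((g ^ k) $ n) \<le> B ^ k * 2 ^ (n + k) / b ^ n" for k
    using power_coeff_bound[OF b_pos B0 gb, of k n] b_pos by (simp add: field_simps)
  have Suc_le_pow2: "real (Suc n) \<le> 2 ^ n"
    by (induction n) simp_all
  have "norm ((f oo g) $ n) \<le> (\<Sum>k=0..n. norm (f $ k) * norm ((g ^ k) $ n))"
    by (simp add: fps_compose_nth) (auto intro: order_trans[OF norm_sum] simp: norm_mult)
  also have "\<dots> \<le> (\<Sum>k=0..n. (A / a ^ k) * (B ^ k * 2 ^ (n + k) / b ^ n))"
    by (intro sum_mono mult_mono fk gk) (use a_pos A0 in \<open>auto intro!: divide_nonneg_pos\<close>)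
  also have "\<dots> = (\<Sum>k=0..n. A * (2 * B / a) ^ k * (2 ^ n / b ^ n))"
    by (intro sum.cong) (auto simp: power_add power_divide power_mult_distrib field_simps)
  also have "\<dots> \<le> (\<Sum>k=0..n. A * K ^ n * (2 ^ n / b ^ n))"
  proof (intro sum_mono mult_right_mono mult_left_mono)
    fix k assume "k \<in> {0..n}"
    have "(2 * B / a) ^ k \<le> K ^ k"
      by (intro power_mono) (auto simp: K a_pos b_pos B0 intro!: divide_nonneg_pos)
    also have "\<dots> \<le> K ^ n" using \<open>k \<in> {0..n}\<close> K1 by (intro power_increasing) auto
    finally show "(2 * B / a) ^ k \<le> K ^ n" .
  qed (use a_pos b_pos A0 in auto)
  also have "\<dots> = real (Suc n) * A * K ^ n * 2 ^ n / b ^ n" by simp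
  also have "\<dots> \<le> 2 ^ n * A * K ^ n * 2 ^ n / b ^ n"
    using Suc_le_pow2 a_pos b_pos K1 A0 by (intro divide_right_mono mult_right_mono) auto
  also have "\<dots> = A / (b / (4 * K)) ^ n"
  proof -
    have "(4::real) ^ n = 2 ^ n * 2 ^ n"
      by (metis power_mult_distrib num_double numeral_times_numeral)
    then show ?thesis using b_pos K1 by (simp add: power_divide power_mult_distrib)
  qed
  finally show ?thesis using b_pos K1 by (simp add: field_simps)
qed

lemma conv1_compose:
  fixes f g :: "complex fps"
  assumes f: "conv1 f" and g: "conv1 g"
  shows "conv1 (f oo g)"
proof -
  obtain a A where "a > 0" "A \<ge> 0" "\<And>n. norm (f $ n) * a ^ n \<le> A"
    using conv1_bound[OF f] by blast
  moreover obtain b B where "b > 0" "B \<ge> 0" "\<And>n. norm (g $ n) * b ^ n \<le> B"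
    using conv1_bound[OF g] by blast
  ultimately have "\<forall>n. norm ((f oo g) $ n) * (b / (4 * max 1 (2 * B / a))) ^ n \<le> A"
    using compose_coeff_bound by blast
  moreover have "b / (4 * max 1 (2 * B / a)) > 0" using \<open>b > 0\<close> by simp
  ultimately show ?thesis unfolding conv1_def by blast
qed

lemma gbinomial_norm_le1:
  fixes a :: real
  assumes "0 \<le> a" "a \<le> 1"
  shows "norm ((complex_of_real a) gchoose k) \<le> 1"
proof (induction k)
  case 0 then show ?case by simp
next
  case (Suc k)
  have eq: "of_nat (Suc k) * (complex_of_real a gchoose Suc k)
      = (complex_of_real a - of_nat k) * (complex_of_real a gchoose k)"
    using gbinomial_mult_1[of "complex_of_real a" k] by (simp add: algebra_simps)
  have "norm (complex_of_real a - of_nat k) = \<bar>a - real k\<bar>"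
    by (metis norm_of_real of_real_diff of_real_of_nat_eq)
  also have "\<dots> \<le> real (Suc k)" using assms by auto
  finally have n1: "norm (complex_of_real a - of_nat k) \<le> real (Suc k)" .
  have "real (Suc k) * norm (complex_of_real a gchoose Suc k)
      = norm ((complex_of_real a - of_nat k) * (complex_of_real a gchoose k))"
    by (simp only: norm_mult norm_of_nat flip: eq)
  also have "\<dots> \<le> real (Suc k) * 1"
    unfolding norm_mult by (intro mult_mono n1 Suc.IH) auto
  finally show ?case by simp
qed

lemma conv1_binomial:
  fixes a :: real
  assumes "0 \<le> a" "a \<le> 1"
  shows "conv1 (fps_binomial (complex_of_real a))"
  unfolding conv1_def using gbinomial_norm_le1[OF assms]
  by (intro exI[of _ 1]) auto

lemma conv1_cmult: "conv1 f \<Longrightarrow> conv1 (fps_const c * f)"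
  unfolding conv1_def
proof (elim exE conjE)
  fix r M assume r: "r > 0" and M: "\<forall>n. norm (f $ n) * r ^ n \<le> M"
  show "\<exists>r>0. \<exists>M. \<forall>n. norm ((fps_const c * f) $ n) * r ^ n \<le> M"
    using r M by (intro exI[of _ r] conjI exI[of _ "norm c * M"])
      (auto simp: norm_mult mult.assoc intro: mult_left_mono)
qed

lemma conv1_shift: "conv1 f \<Longrightarrow> conv1 (fps_shift k f)"
  unfolding conv1_def
proof (elim exE conjE)
  fix r M assume r: "r > 0" and M: "\<forall>n. norm (f $ n) * r ^ n \<le> M"
  have "norm (f $ (n + k)) * r ^ n \<le> M / r ^ k" for n
    using M[rule_format, of "n+k"] r by (simp add: field_simps power_add)
  then show "\<exists>r>0. \<exists>M. \<forall>n. norm (fps_shift k f $ n) * r ^ n \<le> M"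
    using r by auto
qed

lemma conv1_X_mult: "conv1 f \<Longrightarrow> conv1 (fps_X * f)"
  unfolding conv1_def
proof (elim exE conjE)
  fix r M assume r: "r > 0" and M: "\<forall>n. norm (f $ n) * r ^ n \<le> M"
  have "norm ((fps_X * f) $ n) * r ^ n \<le> \<bar>M\<bar> * r" for n
  proof (cases n)
    case 0 then show ?thesis using r by simp
  next
    case (Suc n')
    then show ?thesis using M[rule_format, of n'] r
      by (simp add: fps_X_mult_nth mult.commute mult_left_mono)
  qed
  then show "\<exists>r>0. \<exists>M. \<forall>n. norm ((fps_X * f) $ n) * r ^ n \<le> M"
    using r by blast
qed

lemma conv2_finite:
  assumes "\<And>i j. N < i + j \<Longrightarrow> c i j = 0"
  shows "conv2 c"
proof -
  have "norm (c i j) * 1 ^ (i + j) \<le> (\<Sum>i\<le>N. \<Sum>j\<le>N. norm (c i j))" for i j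
  proof (cases "i + j \<le> N")
    case True
    have "norm (c i j) \<le> (\<Sum>j\<le>N. norm (c i j))"
      using True by (intro member_le_sum) auto
    also have "\<dots> \<le> (\<Sum>i\<le>N. \<Sum>j\<le>N. norm (c i j))"
      using True by (intro member_le_sum[of i "{..N}" "\<lambda>i. \<Sum>j\<le>N. norm (c i j)"])
        (auto intro: sum_nonneg)
    finally show ?thesis by simp
  next
    case False then show ?thesis using assms by (auto intro!: sum_nonneg)
  qed
  then show ?thesis unfolding conv2_def by (intro exI[of _ "1::real"]) auto
qed

section \<open>Substitution of series into bivariate series\<close>

definition monomial2 :: "nat \<Rightarrow> nat \<Rightarrow> complex \<Rightarrow> nat \<Rightarrow> nat \<Rightarrow> complex" where
  "monomial2 p q c = (\<lambda>i j. if i = p \<and> j = q then c else 0)"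

lemma fps_X_factor: "(f :: complex fps) $ 0 = 0 \<Longrightarrow> f = fps_X * fps_shift 1 f"
  by (rule fps_ext) (simp add: fps_X_mult_nth)

lemma prod_pow_nth_zero:
  fixes x y :: "complex fps"
  assumes "x $ 0 = 0" "y $ 0 = 0" "n < p + q"
  shows "(x ^ p * y ^ q) $ n = 0"
proof -
  have "x ^ p * y ^ q = (fps_X * fps_shift 1 x) ^ p * (fps_X * fps_shift 1 y) ^ q"
    using fps_X_factor[OF assms(1)] fps_X_factor[OF assms(2)] by simp
  also have "\<dots> = fps_X ^ (p + q) * ((fps_shift 1 x) ^ p * (fps_shift 1 y) ^ q)"
    by (simp only: power_mult_distrib power_add mult_ac)
  finally show ?thesis using assms(3) by (simp add: fps_X_power_mult_nth)
qed

lemma comp2_monomial2: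
  fixes x y :: "complex fps"
  assumes "x $ 0 = 0" "y $ 0 = 0"
  shows "comp2 (monomial2 p q c) x y = fps_const c * x ^ p * y ^ q"
proof (rule fps_ext)
  fix n
  show "comp2 (monomial2 p q c) x y $ n = (fps_const c * x ^ p * y ^ q) $ n"
  proof (cases "p + q \<le> n")
    case True
    have inner: "(\<Sum>j\<le>n - i. (if i = p \<and> j = q then c else 0) * (x ^ i * y ^ j) $ n)
        = (if i = p then c * (x ^ p * y ^ q) $ n else 0)" for i
    proof (cases "i = p")
      case True
      then have "(\<Sum>j\<le>n - i. (if i = p \<and> j = q then c else 0) * (x ^ i * y ^ j) $ n)
          = (\<Sum>j\<le>n - i. if j = q then c * (x ^ p * y ^ q) $ n else 0)"
        by (intro sum.cong) auto
      also have "\<dots> = c * (x ^ p * y ^ q) $ n" using \<open>p + q \<le> n\<close> True by (subst sum.delta) auto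
      finally show ?thesis using True by simp
    qed simp
    have "comp2 (monomial2 p q c) x y $ n = (\<Sum>i\<le>n. if i = p then c * (x ^ p * y ^ q) $ n else 0)"
      unfolding comp2_def monomial2_def fps_nth_Abs_fps using inner by (intro sum.cong) auto
    also have "\<dots> = c * (x ^ p * y ^ q) $ n" using True by (subst sum.delta) auto
    finally show ?thesis by (simp add: mult.assoc)
  next
    case False
    have "comp2 (monomial2 p q c) x y $ n = 0"
      unfolding comp2_def monomial2_def using False by (auto intro!: sum.neutral)
    then show ?thesis using prod_pow_nth_zero[OF assms, of n p q] False by (simp add: mult.assoc)
  qed
qed

lemma comp2_sum:
  assumes "finite A"
  shows "comp2 (\<lambda>i j. \<Sum>a\<in>A. f a i j) x y = (\<Sum>a\<in>A. comp2 (f a) x y)"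
  by (rule fps_ext) (simp add: comp2_def fps_sum_nth sum_distrib_right sum.swap[of _ A])

lemma comp2_add:
  "comp2 (\<lambda>i j. f i j + g i j) x y = comp2 f x y + comp2 g x y"
  by (rule fps_ext) (simp add: comp2_def distrib_right sum.distrib)

lemma compose_polynomial:
  fixes U b :: "complex fps"
  assumes "\<And>k. N < k \<Longrightarrow> U $ k = 0" "b $ 0 = 0"
  shows "U oo b = (\<Sum>k\<le>N. fps_const (U $ k) * b ^ k)"
proof (rule fps_ext)
  fix n
  have z: "(b ^ k) $ n = 0" if "n < k" for k
    using prod_pow_nth_zero[OF assms(2) assms(2), of n k 0] that by simp
  have "(U oo b) $ n = (\<Sum>k=0..max n N. U $ k * (b ^ k) $ n)"
    unfolding fps_compose_nth using assms(1) z
    by (intro sum.mono_neutral_left) auto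
  also have "\<dots> = (\<Sum>k\<le>N. U $ k * (b ^ k) $ n)"
    using assms(1) z by (subst atLeast0AtMost[symmetric], intro sum.mono_neutral_right) auto
  finally show "(U oo b) $ n = (\<Sum>k\<le>N. fps_const (U $ k) * b ^ k) $ n"
    by (simp add: fps_sum_nth)
qed

text \<open>The coefficients of the target change
  sigma2(X, Y) = U(X + beta Y) Y + V(X + beta Y) for polynomials U, V of degree at most N.\<close>
definition contact_coeffs ::
    "complex fps \<Rightarrow> complex fps \<Rightarrow> complex \<Rightarrow> nat \<Rightarrow> nat \<Rightarrow> nat \<Rightarrow> complex" where
  "contact_coeffs U V \<beta> N = (\<lambda>i j. \<Sum>k\<le>N. \<Sum>l\<le>k.
      monomial2 (k - l) (Suc l) (U $ k * of_nat (k choose l) * \<beta> ^ l) i j +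
      monomial2 (k - l) l (V $ k * of_nat (k choose l) * \<beta> ^ l) i j)"

lemma double_sum_delta:
  fixes N i j :: nat
  shows "(\<Sum>k\<le>N. \<Sum>l\<le>k. if k - l = i \<and> l = j then f k l else 0)
       = (if i + j \<le> N then f (i + j) j else (0::complex))"
proof -
  have inner: "(\<Sum>l\<le>k. if k - l = i \<and> l = j then f k l else 0) = (if k = i + j then f k j else 0)"
    for k
  proof -
    have "(\<Sum>l\<le>k. if k - l = i \<and> l = j then f k l else 0)
        = (\<Sum>l\<le>k. if l = j then (if k = i + j then f k j else 0) else 0)"
      by (intro sum.cong) auto
    also have "\<dots> = (if k = i + j then f k j else 0)" by (subst sum.delta) auto
    finally show ?thesis .
  qed
  show ?thesis unfolding inner by (subst sum.delta) auto
qed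

lemma contact_coeffs_explicit:
  "contact_coeffs U V \<beta> N i j =
     (if 1 \<le> j \<and> i + j - 1 \<le> N
      then U $ (i + j - 1) * of_nat ((i + j - 1) choose (j - 1)) * \<beta> ^ (j - 1) else 0) +
     (if i + j \<le> N then V $ (i + j) * of_nat ((i + j) choose j) * \<beta> ^ j else 0)"
proof -
  have U_part: "(\<Sum>k\<le>N. \<Sum>l\<le>k. monomial2 (k - l) (Suc l) (U $ k * of_nat (k choose l) * \<beta> ^ l) i j)
      = (if 1 \<le> j \<and> i + j - 1 \<le> N
         then U $ (i + j - 1) * of_nat ((i + j - 1) choose (j - 1)) * \<beta> ^ (j - 1) else 0)"
  proof (cases j)
    case 0 then show ?thesis by (simp add: monomial2_def)
  next
    case (Suc j')
    have "(\<Sum>k\<le>N. \<Sum>l\<le>k. monomial2 (k - l) (Suc l) (U $ k * of_nat (k choose l) * \<beta> ^ l) i j)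
        = (\<Sum>k\<le>N. \<Sum>l\<le>k. if k - l = i \<and> l = j' then U $ k * of_nat (k choose l) * \<beta> ^ l else 0)"
      unfolding monomial2_def Suc by (intro sum.cong) auto
    then show ?thesis using Suc by (simp add: double_sum_delta)
  qed
  have V_part: "(\<Sum>k\<le>N. \<Sum>l\<le>k. monomial2 (k - l) l (V $ k * of_nat (k choose l) * \<beta> ^ l) i j)
      = (if i + j \<le> N then V $ (i + j) * of_nat ((i + j) choose j) * \<beta> ^ j else 0)"
    unfolding monomial2_def by (subst double_sum_delta[symmetric]) (intro sum.cong; auto)
  show ?thesis unfolding contact_coeffs_def sum.distrib U_part V_part ..
qed

lemma conv2_contact_coeffs: "conv2 (contact_coeffs U V \<beta> N)"
  by (rule conv2_finite[of "Suc N"]) (auto simp: contact_coeffs_explicit)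

lemma comp2_contact_coeffs:
  fixes x y U V :: "complex fps"
  assumes x0: "x $ 0 = 0" and y0: "y $ 0 = 0"
    and U: "\<And>k. N < k \<Longrightarrow> U $ k = 0" and V: "\<And>k. N < k \<Longrightarrow> V $ k = 0"
  shows "comp2 (contact_coeffs U V \<beta> N) x y
       = (U oo (x + fps_const \<beta> * y)) * y + (V oo (x + fps_const \<beta> * y))"
proof -
  let ?t = "x + fps_const \<beta> * y"
  have t0: "?t $ 0 = 0" using x0 y0 by simp
  have binomial: "?t ^ k = (\<Sum>l\<le>k. fps_const (of_nat (k choose l) * \<beta> ^ l) * x ^ (k - l) * y ^ l)"
    for k
  proof -
    have "?t ^ k = (\<Sum>l\<le>k. of_nat (k choose l) * (fps_const \<beta> * y) ^ l * x ^ (k - l))"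
      using binomial_ring[of "fps_const \<beta> * y" x k] by (simp add: add.commute)
    also have "\<dots> = (\<Sum>l\<le>k. fps_const (of_nat (k choose l) * \<beta> ^ l) * x ^ (k - l) * y ^ l)"
      by (intro sum.cong) (simp_all add: power_mult_distrib fps_of_nat[symmetric] mult_ac)
    finally show ?thesis .
  qed
  have "comp2 (contact_coeffs U V \<beta> N) x y = (\<Sum>k\<le>N. \<Sum>l\<le>k.
      fps_const (U $ k * of_nat (k choose l) * \<beta> ^ l) * x ^ (k - l) * y ^ Suc l +
      fps_const (V $ k * of_nat (k choose l) * \<beta> ^ l) * x ^ (k - l) * y ^ l)"
    unfolding contact_coeffs_def by (simp add: comp2_sum comp2_add comp2_monomial2[OF x0 y0])
  also have "\<dots> = (\<Sum>k\<le>N. fps_const (U $ k) * ?t ^ k) * y + (\<Sum>k\<le>N. fps_const (V $ k) * ?t ^ k)"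
    unfolding binomial sum.distrib sum_distrib_left sum_distrib_right
    by (intro arg_cong2[where f="(+)"] sum.cong refl) (simp_all add: mult_ac)
  finally show ?thesis using compose_polynomial[OF U t0] compose_polynomial[OF V t0] by simp
qed

lemma A_equiv_by_contact:
  fixes x y z0 r U V :: "complex fps"
  assumes x0: "x $ 0 = 0" and y0: "y $ 0 = 0"
    and r: "conv1 r" "r $ 0 = 0" "r $ 1 = 1"
    and xr: "x oo r = x + fps_const \<beta> * y" and zr: "z0 oo r = y"
    and U: "\<And>k. N < k \<Longrightarrow> U $ k = 0" "U $ 0 = 1"
    and V: "\<And>k. N < k \<Longrightarrow> V $ k = 0" "V $ 0 = 0" "V $ 1 = 0"
  shows "A_equiv (x, y) (x, (U oo x) * z0 + (V oo x))"
proof -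
  define s1 where "s1 = (\<lambda>i j. monomial2 1 0 1 i j + monomial2 0 1 \<beta> i j)"
  define s2 where "s2 = contact_coeffs U V \<beta> (max 1 N)"
  have U': "\<And>k. max 1 N < k \<Longrightarrow> U $ k = 0" and V': "\<And>k. max 1 N < k \<Longrightarrow> V $ k = 0"
    using U V by auto
  have fst_eq: "x oo r = comp2 s1 x y"
    using xr unfolding s1_def comp2_add comp2_monomial2[OF x0 y0] by simp
  have "((U oo x) * z0 + (V oo x)) oo r = ((U oo x) oo r) * (z0 oo r) + ((V oo x) oo r)"
    by (simp add: fps_compose_add_distrib fps_compose_mult_distrib[OF r(2)])
  also have "\<dots> = (U oo (x + fps_const \<beta> * y)) * y + (V oo (x + fps_const \<beta> * y))"
    using fps_compose_assoc[OF r(2) x0, of U] fps_compose_assoc[OF r(2) x0, of V] zr xr by simp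
  also have "\<dots> = comp2 s2 x y"
    unfolding s2_def by (rule comp2_contact_coeffs[OF x0 y0 U' V', symmetric])
  finally have snd_eq: "((U oo x) * z0 + (V oo x)) oo r = comp2 s2 x y" .
  have "conv2 s1" by (rule conv2_finite[of 1]) (auto simp: s1_def monomial2_def)
  then show ?thesis
    unfolding A_equiv_def
    using fst_eq snd_eq r U V conv2_contact_coeffs[of U V \<beta> "max 1 N"]
    by (intro exI[of _ s1] exI[of _ s2] exI[of _ r] exI[of _ \<beta>])
      (simp add: s1_def s2_def monomial2_def contact_coeffs_explicit)
qed

lemma fps_binomial_power: "(fps_binomial (a::complex)) ^ j = fps_binomial (of_nat j * a)"
proof (induction j)
  case 0
  have "fps_binomial (0::complex) = 1" by (rule fps_ext) (simp add: gbinomial_0_left)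
  then show ?case by simp
next
  case (Suc j)
  have "of_nat (Suc j) * a = a + of_nat j * a" by (simp add: algebra_simps)
  then show ?case using Suc by (simp add: fps_binomial_add_mult)
qed

lemma power_initial_segment:
  fixes w :: "complex fps"
  assumes p: "p > 0" and w: "\<And>i. i < p + L \<Longrightarrow> w $ i = (if i = p then 1 else 0)"
  shows "n < k * p + L \<Longrightarrow> (w ^ k) $ n = (if n = k * p then 1 else 0)"
proof (induction k arbitrary: n)
  case 0 then show ?case by simp
next
  case (Suc k)
  have summand: "w $ i * (w ^ k) $ (n - i) = (if i = p then (if n = Suc k * p then 1 else 0) else 0)"
    if i: "i \<in> {0..n}" for i
  proof (cases "i < p")
    case True
    then show ?thesis using w[of i] Suc.prems by auto
  next
    case False
    have "n - i < k * p + L" using False Suc.prems i by auto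
    then have wk: "(w ^ k) $ (n - i) = (if n - i = k * p then 1 else 0)" by (rule Suc.IH)
    show ?thesis
    proof (cases "n - i = k * p")
      case True
      then have "i < p + L" using Suc.prems i by auto
      then show ?thesis using w[of i] wk True i by auto
    qed (use wk i in auto)
  qed
  have "(w ^ Suc k) $ n = (\<Sum>i=0..n. w $ i * (w ^ k) $ (n - i))"
    by (simp add: fps_mult_nth)
  also have "\<dots> = (\<Sum>i=0..n. if i = p then (if n = Suc k * p then 1 else 0) else 0)"
    using summand by (intro sum.cong) auto
  also have "\<dots> = (if n = Suc k * p then 1 else 0)"
    using p by (subst sum.delta) auto
  finally show ?case .
qed

lemma monomial_compose_X_power:
  assumes "v > 0"
  shows "(fps_const (c::complex) * fps_X ^ a) oo fps_X ^ v = fps_const c * fps_X ^ (a * v)"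
proof -
  have "(fps_const c * fps_X ^ a) oo fps_X ^ v = fps_const c * (fps_X ^ a oo fps_X ^ v)"
    by (simp add: fps_const_mult_apply_left)
  also have "fps_X ^ a oo (fps_X ^ v :: complex fps) = fps_X ^ (a * v)"
    using assms by (simp add: fps_X_power_compose mult.commute flip: power_mult)
  finally show ?thesis .
qed


section \<open>The coefficient analysis for y = t^v1 + t^lam + ... with n1 = 2\<close>

locale puiseux_n1_two =
  fixes v0 v1 lam e m :: nat and y :: "complex fps"
  assumes e_pos: "e > 0" and v0_eq: "v0 = 2 * e" and v1_eq: "v1 = m * e"
    and m_odd: "odd m" and m_ge_3: "m \<ge> 3" and v1_less_lam: "v1 < lam"
    and y_below_v1: "\<And>i. i < v1 \<Longrightarrow> y $ i = 0" and y_v1: "y $ v1 = 1"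
    and y_between: "\<And>i. v1 < i \<Longrightarrow> i < lam \<Longrightarrow> y $ i = 0" and y_lam: "y $ lam = 1"
begin

text \<open>d is the index whose coefficient is to be removed; M is the set of indices
  a v0 + b v1 (b \<in> {0,1}) beyond 2 v1 - v0, whose coefficients the target changes
  can remove; w = y / t^v0 = t^p + t^(p+L) + ....\<close>
definition "p = v1 - v0"
definition "L = lam - v1"
definition "d = v1 + lam - v0"
definition "M = {i. e dvd i \<and> 2 * v1 - v0 \<le> i}"
definition "w = fps_shift v0 y"

lemma v0_pos: "v0 > 0" using e_pos by (simp add: v0_eq)

lemma v0_less_v1: "v0 < v1"
proof -
  have "2 * e < m * e" using m_ge_3 e_pos by (intro mult_strict_right_mono) auto
  then show ?thesis by (simp add: v0_eq v1_eq)
qed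

lemma p_pos: "p > 0" using v0_less_v1 by (simp add: p_def)
lemma L_pos: "L > 0" using v1_less_lam by (simp add: L_def)
lemma e_dvd_p: "e dvd p"
proof -
  have "p = (m - 2) * e" unfolding p_def by (simp add: v0_eq v1_eq diff_mult_distrib)
  then show ?thesis by simp
qed
lemma e_dvd_v1: "e dvd v1" by (simp add: v1_eq)
lemma e_dvd_v0: "e dvd v0" by (simp add: v0_eq)
lemma d_eq: "d = v1 + p + L" using v0_less_v1 v1_less_lam by (simp add: d_def p_def L_def)
lemma lam_less_d: "lam < d" using d_eq L_def v1_less_lam p_pos by simp

lemma M_iff: "i \<in> M \<longleftrightarrow> e dvd i \<and> v1 + p \<le> i"
proof -
  have "2 * v1 - v0 = v1 + p" using v0_less_v1 by (simp add: p_def)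
  then show ?thesis by (simp add: M_def)
qed

lemma not_dvd_d_if_not_M: "d \<notin> M \<Longrightarrow> \<not> e dvd d"
  using d_eq by (simp add: M_iff)

lemma y_nonzero: "y $ j \<noteq> 0 \<Longrightarrow> j = v1 \<or> lam \<le> j"
  using y_below_v1[of j] y_between[of j] by (cases "j < v1 \<or> (v1 < j \<and> j < lam)") auto

lemma y0: "y $ 0 = 0" using y_below_v1[of 0] v0_less_v1 by simp

lemma w_nth: "w $ i = y $ (i + v0)" by (simp add: w_def)

lemma w_initial: "i < p + L \<Longrightarrow> w $ i = (if i = p then 1 else 0)"
  using y_below_v1[of "i + v0"] y_v1 y_between[of "i + v0"] v0_less_v1 v1_less_lam
  by (cases "i + v0 < v1 \<or> i + v0 = v1") (auto simp: w_nth p_def L_def)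

lemma w_pL: "w $ (p + L) = 1"
  using v0_less_v1 v1_less_lam y_lam by (simp add: w_nth p_def L_def)

lemma w0: "w $ 0 = 0" using w_initial[of 0] p_pos by simp

lemma X_power_v0_times_w: "fps_X ^ v0 * w = y"
  by (rule fps_ext) (use y_below_v1 v0_less_v1 in \<open>simp add: fps_X_power_mult_nth w_nth\<close>)

lemma w_power_initial: "n < k * p + L \<Longrightarrow> (w ^ k) $ n = (if n = k * p then 1 else 0)"
  using power_initial_segment[OF p_pos w_initial] by blast

subsection \<open>The reparametrisation rho = t (1 + beta w)^(1/v0)\<close>

text \<open>root_power beta j = (1 + beta w)^(j/v0), so that rho^j = t^j root_power beta j.\<close>
definition root_power :: "complex \<Rightarrow> nat \<Rightarrow> complex fps" where
  "root_power \<beta> j = fps_binomial (of_nat j / of_nat v0) oo (fps_const \<beta> * w)"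

definition rho :: "complex \<Rightarrow> complex fps" where
  "rho \<beta> = fps_X * root_power \<beta> 1"

lemma rho0: "rho \<beta> $ 0 = 0" by (simp add: rho_def)

lemma beta_w0: "(fps_const \<beta> * w) $ 0 = 0" by (simp add: w0)

lemma root_power_power: "(root_power \<beta> 1) ^ j = root_power \<beta> j"
proof -
  have "(root_power \<beta> 1) ^ j = (fps_binomial (of_nat 1 / of_nat v0)) ^ j oo (fps_const \<beta> * w)"
    by (simp only: root_power_def fps_compose_power[OF beta_w0])
  also have "\<dots> = root_power \<beta> j" by (simp add: fps_binomial_power root_power_def)
  finally show ?thesis .
qed

lemma rho_power: "(rho \<beta>) ^ j = fps_X ^ j * root_power \<beta> j"
  unfolding rho_def power_mult_distrib root_power_power by (rule refl)

lemma root_power_v0: "root_power \<beta> v0 = 1 + fps_const \<beta> * w"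
proof -
  have "root_power \<beta> v0 = (1 + fps_X) oo (fps_const \<beta> * w)"
    using v0_pos by (simp add: root_power_def fps_binomial_1)
  then show ?thesis by (simp add: fps_compose_add_distrib fps_X_fps_compose_startby0[OF beta_w0])
qed

lemma X_power_v0_compose_rho: "fps_X ^ v0 oo rho \<beta> = fps_X ^ v0 + fps_const \<beta> * y"
proof -
  have "fps_X ^ v0 oo rho \<beta> = fps_X ^ v0 * root_power \<beta> v0"
    by (simp only: fps_X_power_compose[OF rho0] rho_power)
  also have "\<dots> = fps_X ^ v0 + fps_const \<beta> * (fps_X ^ v0 * w)"
    by (simp add: root_power_v0 algebra_simps)
  finally show ?thesis by (simp add: X_power_v0_times_w)
qed

lemma conv1_rho:
  assumes "conv1 y"
  shows "conv1 (rho \<beta>)"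
proof -
  have "conv1 (fps_binomial (complex_of_real (1 / real v0)))"
    using v0_pos by (intro conv1_binomial) auto
  then have "conv1 (fps_binomial (of_nat 1 / of_nat v0))" by simp
  moreover have "conv1 (fps_const \<beta> * w)" unfolding w_def by (intro conv1_cmult conv1_shift assms)
  ultimately have "conv1 (root_power \<beta> 1)" unfolding root_power_def by (rule conv1_compose)
  then show ?thesis unfolding rho_def by (rule conv1_X_mult)
qed

lemma root_power_nth:
  "root_power \<beta> j $ n = (\<Sum>k=0..n. (of_nat j / of_nat v0 gchoose k) * \<beta> ^ k * (w ^ k) $ n)"
  unfolding root_power_def fps_compose_nth by (simp add: power_mult_distrib fps_const_power mult.assoc)

lemma root_power_initial:
  assumes n: "n < p + L"
  shows "root_power \<beta> j $ n =
    (if p dvd n then (of_nat j / of_nat v0 gchoose (n div p)) * \<beta> ^ (n div p) else 0)"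
proof -
  have wk: "(w ^ k) $ n = (if n = k * p then 1 else 0)" for k
    using w_power_initial[of n k] n by (cases k) auto
  have "root_power \<beta> j $ n = (\<Sum>k=0..n. if k = n div p \<and> p dvd n
      then (of_nat j / of_nat v0 gchoose k) * \<beta> ^ k else 0)"
    unfolding root_power_nth wk using p_pos by (intro sum.cong) (auto simp: mult.commute)
  also have "\<dots> = (if p dvd n then (of_nat j / of_nat v0 gchoose (n div p)) * \<beta> ^ (n div p) else 0)"
    by (cases "p dvd n") (simp_all add: sum.delta)
  finally show ?thesis .
qed

lemma root_power_0: "root_power \<beta> j $ 0 = 1"
  using root_power_initial[of 0] p_pos L_pos by simp

lemma root_power_p: "root_power \<beta> j $ p = of_nat j / of_nat v0 * \<beta>"
  using root_power_initial[of p] p_pos L_pos by simp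

lemma root_power_nonzero: "n < p + L \<Longrightarrow> root_power \<beta> j $ n \<noteq> 0 \<Longrightarrow> p dvd n"
  using root_power_initial[of n \<beta> j] by (auto split: if_splits)

text \<open>At p + L the term t^(p+L) of w contributes linearly.\<close>
lemma root_power_pL:
  assumes nd: "\<not> p dvd (p + L)"
  shows "root_power \<beta> j $ (p + L) = of_nat j / of_nat v0 * \<beta>"
proof -
  have wk: "(w ^ k) $ (p + L) = (if k = 1 then 1 else 0)" for k
  proof (cases "k \<ge> 2")
    case True
    then have "p + L < k * p + L" using p_pos by (simp add: less_le_trans[of p "2 * p" "k * p"])
    then have "(w ^ k) $ (p + L) = (if p + L = k * p then 1 else 0)" by (rule w_power_initial)
    moreover have "p + L \<noteq> k * p" using nd by (metis dvd_triv_right)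
    ultimately show ?thesis using True by simp
  next
    case False
    then have "k = 0 \<or> k = 1" by auto
    then show ?thesis using w_pL p_pos by auto
  qed
  have "root_power \<beta> j $ (p + L) =
      (\<Sum>k=0..p+L. if k = 1 then (of_nat j / of_nat v0 gchoose k) * \<beta> ^ k else 0)"
    unfolding root_power_nth wk by (intro sum.cong) auto
  also have "\<dots> = of_nat j / of_nat v0 * \<beta>"
    using p_pos by (subst sum.delta) auto
  finally show ?thesis .
qed

lemma rho1: "rho \<beta> $ 1 = 1" by (simp add: rho_def root_power_0)

lemma compose_rho_nth: "(f oo rho \<beta>) $ i = (\<Sum>j=0..i. f $ j * root_power \<beta> j $ (i - j))"
  unfolding fps_compose_nth rho_power by (intro sum.cong) (auto simp: fps_X_power_mult_nth)

lemma compose_rho_nth_diagonal: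
  assumes "\<And>j. j < i \<Longrightarrow> f $ j * root_power \<beta> j $ (i - j) = 0"
  shows "(f oo rho \<beta>) $ i = f $ i"
proof -
  have "(f oo rho \<beta>) $ i = (\<Sum>j=0..i. if j = i then f $ i else 0)"
    unfolding compose_rho_nth using assms by (intro sum.cong) (auto simp: root_power_0)
  then show ?thesis by simp
qed

lemma compose_rho_unchanged:
  assumes i: "i < d" "i \<notin> M"
  shows "(y oo rho \<beta>) $ i = y $ i"
proof (rule compose_rho_nth_diagonal)
  fix j assume ji: "j < i"
  show "y $ j * root_power \<beta> j $ (i - j) = 0"
  proof (rule ccontr)
    assume "\<not> ?thesis"
    then have yj: "y $ j \<noteq> 0" and bj: "root_power \<beta> j $ (i - j) \<noteq> 0" by auto
    from y_nonzero[OF yj] show False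
    proof
      assume jv: "j = v1"
      have pd: "p dvd (i - j)" using i(1) ji d_eq jv by (intro root_power_nonzero[OF _ bj]) simp
      then have "e dvd i - j" using e_dvd_p dvd_trans by blast
      then have "e dvd i" using e_dvd_v1 jv ji by (metis dvd_add le_add_diff_inverse less_imp_le)
      moreover have "p \<le> i - j" using pd ji p_pos by (simp add: dvd_imp_le)
      ultimately show False using i(2) jv ji by (simp add: M_iff)
    next
      assume jl: "lam \<le> j"
      have "i - j < p" using i(1) jl d_eq L_def v1_less_lam p_pos by arith
      moreover have "p dvd (i - j)" using \<open>i - j < p\<close> by (intro root_power_nonzero[OF _ bj]) simp
      ultimately show False using ji by (auto dest: dvd_imp_le)
    qed
  qed
qed

text \<open>At d the terms t^v1 and t^lam of y contribute beta (v1 + lam)/v0.\<close>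
lemma compose_rho_d:
  assumes nd: "\<not> e dvd d"
  shows "(y oo rho \<beta>) $ d = y $ d + \<beta> * (of_nat v1 + of_nat lam) / of_nat v0"
proof -
  have npd: "\<not> p dvd (p + L)"
  proof
    assume "p dvd (p + L)"
    then have "e dvd (p + L)" using e_dvd_p dvd_trans by blast
    then show False using nd e_dvd_v1 d_eq by (metis dvd_add add.assoc)
  qed
  have ld: "lam < d" "v1 < lam" using lam_less_d v1_less_lam by auto
  define t where "t j = y $ j * root_power \<beta> j $ (d - j)" for j
  have zero: "t j = 0" if "j \<in> {0..d} - {v1, lam, d}" for j
  proof (cases "y $ j = 0")
    case False
    then have "lam < j" "j < d" using y_nonzero[of j] that by auto
    then have lt: "d - j < p" "0 < d - j" using d_eq L_def v1_less_lam by auto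
    then have "\<not> p dvd (d - j)" by (auto dest: dvd_imp_le)
    then have "root_power \<beta> j $ (d - j) = 0" using root_power_nonzero[of "d - j" \<beta> j] lt by auto
    then show ?thesis by (simp add: t_def)
  qed (simp add: t_def)
  have "(y oo rho \<beta>) $ d = (\<Sum>j=0..d. t j)" unfolding compose_rho_nth t_def ..
  also have "\<dots> = (\<Sum>j\<in>{v1, lam, d}. t j)"
    using zero ld by (intro sum.mono_neutral_right) auto
  also have "\<dots> = t v1 + t lam + t d" using ld by simp
  also have "t v1 = \<beta> * of_nat v1 / of_nat v0"
    using d_eq by (simp add: t_def y_v1 root_power_pL[OF npd])
  also have "t lam = \<beta> * of_nat lam / of_nat v0"
    using d_eq L_def v1_less_lam by (simp add: t_def y_lam root_power_p)
  also have "t d = y $ d" by (simp add: t_def root_power_0)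
  finally show ?thesis by (simp add: add_divide_distrib distrib_left)
qed

lemma inverse_reparam_nth:
  assumes z: "z oo rho \<beta> = y"
  shows "i \<le> d \<Longrightarrow> i \<notin> M \<Longrightarrow> z $ i = y $ i - ((y oo rho \<beta>) $ i - y $ i)"
proof (induction i rule: less_induct)
  case (less i)
  define D where "D = z - y"
  have diagonal: "(D oo rho \<beta>) $ i = D $ i"
  proof (rule compose_rho_nth_diagonal)
    fix j assume ji: "j < i"
    show "D $ j * root_power \<beta> j $ (i - j) = 0"
    proof (cases "j \<in> M")
      case False
      then have "z $ j = y $ j - ((y oo rho \<beta>) $ j - y $ j)" using less ji by simp
      moreover have "(y oo rho \<beta>) $ j = y $ j" using compose_rho_unchanged False ji less.prems by simp
      ultimately show ?thesis by (simp add: D_def)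
    next
      case True
      then have ej: "e dvd j" and jge: "v1 + p \<le> j" by (auto simp: M_iff)
      have lt: "i - j < p + L" using less.prems jge d_eq ji p_pos by simp
      have "root_power \<beta> j $ (i - j) = 0"
      proof (rule ccontr)
        assume "root_power \<beta> j $ (i - j) \<noteq> 0"
        then have "e dvd (i - j)" using root_power_nonzero[OF lt] e_dvd_p dvd_trans by blast
        then have "e dvd i" using ej ji by (metis dvd_add le_add_diff_inverse less_imp_le)
        then show False using less.prems jge ji by (simp add: M_iff)
      qed
      then show ?thesis by simp
    qed
  qed
  have "D oo rho \<beta> = y - (y oo rho \<beta>)"
    unfolding D_def fps_compose_sub_distrib z ..
  then have "D $ i = y $ i - (y oo rho \<beta>) $ i" using diagonal by simp
  then show ?case by (simp add: D_def algebra_simps)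
qed

text \<open>The choice of beta that kills the coefficient of t^d when d \<notin> M.\<close>
definition "beta0 = (if e dvd d then 0 else of_nat v0 * y $ d / (of_nat v1 + of_nat lam))"

lemma reparam_normal_form:
  obtains z where "z oo rho beta0 = y"
    and "\<And>i. i \<le> d \<Longrightarrow> i \<notin> M \<Longrightarrow> z $ i = (if i = d then 0 else y $ i)"
proof
  let ?r = "rho beta0"
  define z where "z = y oo fps_inv ?r"
  have inv0: "fps_inv ?r $ 0 = 0" by (simp add: fps_inv_def)
  show zr: "z oo ?r = y"
    unfolding z_def using fps_compose_assoc[OF rho0[of beta0] inv0, of y] fps_inv[OF rho0[of beta0]] rho1[of beta0]
    by simp
  fix i assume i: "i \<le> d" "i \<notin> M"
  have zi: "z $ i = y $ i - ((y oo ?r) $ i - y $ i)"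
    using inverse_reparam_nth[OF zr i] .
  show "z $ i = (if i = d then 0 else y $ i)"
  proof (cases "i = d")
    case False
    then show ?thesis using zi compose_rho_unchanged[of i] i by simp
  next
    case True
    then have nd: "\<not> e dvd d" using i not_dvd_d_if_not_M by simp
    have "of_nat v1 + of_nat lam \<noteq> (0::complex)"
      using v1_less_lam by (metis add_gr_0 less_nat_zero_code neq0_conv of_nat_add of_nat_eq_0_iff)
    then show ?thesis using zi compose_rho_d[OF nd] True nd v0_pos by (simp add: beta0_def)
  qed
qed

subsection \<open>Removing the coefficients at indices in M by target changes\<close>

definition contact :: "complex fps \<Rightarrow> complex fps \<Rightarrow> complex fps \<Rightarrow> complex fps" where
  "contact z U V = (U oo fps_X ^ v0) * z + (V oo fps_X ^ v0)"

text \<open>U, V are polynomials of degree at most d with U(0) = 1 and V = O(X^2), so that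
  the change is tangent to the identity as required by A-equivalence.\<close>
definition admissible :: "complex fps \<Rightarrow> complex fps \<Rightarrow> bool" where
  "admissible U V \<longleftrightarrow>
     (\<forall>n>d. U $ n = 0) \<and> (\<forall>n>d. V $ n = 0) \<and> U $ 0 = 1 \<and> V $ 0 = 0 \<and> V $ 1 = 0"

lemma contact_add_V:
  "contact z U (V + fps_const c * fps_X ^ a) = contact z U V + fps_const c * fps_X ^ (a * v0)"
  by (simp add: contact_def fps_compose_add_distrib monomial_compose_X_power[OF v0_pos])

lemma contact_add_U_nth:
  "contact z (U + fps_const c * fps_X ^ a) V $ i
     = contact z U V $ i + c * (if i < a * v0 then 0 else z $ (i - a * v0))"
proof -
  have "contact z (U + fps_const c * fps_X ^ a) V
      = contact z U V + fps_const c * (fps_X ^ (a * v0) * z)"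
    by (simp add: contact_def fps_compose_add_distrib monomial_compose_X_power[OF v0_pos]
        algebra_simps)
  then show ?thesis by (simp add: fps_X_power_mult_nth)
qed

text \<open>Every index in M is of the form a v0 with a \<ge> 2, or a v0 + v1 with a \<ge> 1; this is
  where n1 = 2 (i.e. m odd) enters.\<close>
lemma M_decomposition:
  assumes "k \<in> M"
  shows "(\<exists>a\<ge>2. k = a * v0) \<or> (\<exists>a\<ge>1. k = a * v0 + v1 \<and> v1 < a * v0 + v0)"
proof -
  from assms have "e dvd k" and k_ge: "v1 + p \<le> k" by (auto simp: M_iff)
  then obtain q where kq: "k = q * e" by (metis dvdE mult.commute)
  have "v1 + p = (2 * m - 2) * e"
    using v0_less_v1 unfolding p_def by (simp add: v1_eq v0_eq diff_mult_distrib)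
  then have q_ge: "2 * m - 2 \<le> q" using k_ge kq e_pos by simp
  show ?thesis
  proof (cases "even q")
    case True
    then obtain a where "q = 2 * a" by (auto elim: evenE)
    then have ka: "k = a * v0" using kq v0_eq by simp
    have "v0 < k" using k_ge v0_less_v1 by simp
    then have "a \<ge> 2" using ka by (metis mult_less_cancel2 mult_1 less_eq_Suc_le Suc_1)
    then show ?thesis using ka by blast
  next
    case False
    then have "2 * m - 2 < q" using q_ge by presburger
    define a where "a = (q - m) div 2"
    have qa: "q = 2 * a + m" using \<open>2 * m - 2 < q\<close> m_ge_3 m_odd False unfolding a_def by presburger
    have "m * e < (2 * a + 2) * e" using qa \<open>2 * m - 2 < q\<close> e_pos by (intro mult_strict_right_mono) auto
    then have "v1 < a * v0 + v0" by (simp add: v0_eq v1_eq algebra_simps)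
    moreover have "k = a * v0 + v1" using kq qa by (simp add: v0_eq v1_eq algebra_simps)
    moreover have "a \<ge> 1" using qa \<open>2 * m - 2 < q\<close> m_ge_3 by simp
    ultimately show ?thesis by blast
  qed
qed

text \<open>When U is changed by c X^a with k = a v0 + v1, the coefficients of the result
  change at k, at larger indices in M, and beyond d only.\<close>
lemma shifted_coefficient_vanishes:
  assumes zy: "\<And>i. i < d \<Longrightarrow> i \<notin> M \<Longrightarrow> z $ i = y $ i"
    and ka: "k = a * v0 + v1" and big: "v1 < a * v0 + v0"
    and i: "i \<le> d" "i \<noteq> k" "i \<notin> M \<or> i < k" "a * v0 \<le> i"
  shows "z $ (i - a * v0) = 0"
proof -
  define j where "j = i - a * v0"
  have ij: "i = a * v0 + j" using i(4) by (simp add: j_def)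
  consider "j < v1" | "j = v1" | "v1 < j \<and> j < lam \<and> j \<notin> M" | "v1 < j \<and> j \<in> M" | "lam \<le> j"
    by linarith
  then have "z $ j = 0"
  proof cases
    case 1
    then have "j \<notin> M" by (simp add: M_iff)
    then show ?thesis using 1 zy[of j] y_below_v1[of j] v1_less_lam lam_less_d by simp
  next
    case 2 then show ?thesis using ij ka i(2) by simp
  next
    case 3 then show ?thesis using zy[of j] y_between[of j] lam_less_d by simp
  next
    case 4
    then have "i \<in> M" using ij e_dvd_v0 by (simp add: M_iff)
    moreover have "k < i" using 4 ij ka by simp
    ultimately show ?thesis using i(3) by simp
  next
    case 5
    then have "d < i" using ij big d_def v1_less_lam v0_less_v1 by simp
    then show ?thesis using i(1) by simp
  qed
  then show ?thesis by (simp add: j_def)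
qed

lemma contact_step:
  assumes zy: "\<And>i. i < d \<Longrightarrow> i \<notin> M \<Longrightarrow> z $ i = y $ i"
    and adm: "admissible U V" and k: "k \<in> M" "k \<le> d"
  obtains U' V' where "admissible U' V'" and "contact z U' V' $ k = contact z U V $ k + c"
    and "\<And>i. i \<le> d \<Longrightarrow> i \<noteq> k \<Longrightarrow> i \<notin> M \<or> i < k \<Longrightarrow> contact z U' V' $ i = contact z U V $ i"
  using M_decomposition[OF k(1)]
proof
  assume "\<exists>a\<ge>2. k = a * v0"
  then obtain a where a: "a \<ge> 2" "k = a * v0" by blast
  then have "a \<le> d" using k(2) v0_pos by (metis le_trans mult_le_mono1 mult_1 less_eq_Suc_le One_nat_def mult.commute)
  then have "admissible U (V + fps_const c * fps_X ^ a)" using adm a by (auto simp: admissible_def)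
  then show ?thesis using that a by (simp add: contact_add_V)
next
  assume "\<exists>a\<ge>1. k = a * v0 + v1 \<and> v1 < a * v0 + v0"
  then obtain a where a: "a \<ge> 1" "k = a * v0 + v1" "v1 < a * v0 + v0" by blast
  have "a \<le> a * v0" using v0_pos by simp
  then have "a \<le> d" using a k(2) by linarith
  then have "admissible (U + fps_const c * fps_X ^ a) V" using adm a by (auto simp: admissible_def)
  moreover have "contact z (U + fps_const c * fps_X ^ a) V $ i = contact z U V $ i"
    if "i \<le> d" "i \<noteq> k" "i \<notin> M \<or> i < k" for i
    using shifted_coefficient_vanishes[OF zy a(2,3) that] by (simp add: contact_add_U_nth)
  moreover have "z $ v1 = 1" using zy[of v1] y_v1 d_eq p_pos by (simp add: M_iff)
  ultimately show ?thesis using that a by (simp add: contact_add_U_nth)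
qed

lemma contact_elimination:
  fixes z T :: "complex fps"
  assumes zy: "\<And>i. i < d \<Longrightarrow> i \<notin> M \<Longrightarrow> z $ i = y $ i"
    and zT: "\<And>i. i \<le> d \<Longrightarrow> i \<notin> M \<Longrightarrow> z $ i = T $ i"
  obtains U V where "admissible U V" and "\<And>i. i \<le> d \<Longrightarrow> contact z U V $ i = T $ i"
proof -
  have "\<exists>U V. admissible U V \<and> (\<forall>i\<le>d. (i \<notin> M \<or> i < k) \<longrightarrow> contact z U V $ i = T $ i)" for k
  proof (induction k)
    case 0
    have "contact z 1 0 = z" by (simp add: contact_def)
    then show ?case using zT by (intro exI[of _ 1] exI[of _ 0]) (auto simp: admissible_def)
  next
    case (Suc k)
    then obtain U V where adm: "admissible U V"
      and agree: "\<And>i. i \<le> d \<Longrightarrow> i \<notin> M \<or> i < k \<Longrightarrow> contact z U V $ i = T $ i"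
      by blast
    show ?case
    proof (cases "k \<in> M \<and> k \<le> d")
      case False
      then show ?thesis using adm agree by (intro exI[of _ U] exI[of _ V]) (auto simp: less_Suc_eq)
    next
      case True
      then obtain U' V' where "admissible U' V'"
        and "contact z U' V' $ k = contact z U V $ k + (T $ k - contact z U V $ k)"
        and "\<And>i. i \<le> d \<Longrightarrow> i \<noteq> k \<Longrightarrow> i \<notin> M \<or> i < k \<Longrightarrow> contact z U' V' $ i = contact z U V $ i"
        using contact_step[OF zy adm] by blast
      then show ?thesis using agree by (intro exI[of _ U'] exI[of _ V']) (auto simp: less_Suc_eq)
    qed
  qed
  from this[of "Suc d"] that show ?thesis by auto
qed

lemma remove_coefficient_d:
  assumes "conv1 y"
  obtains y1 where "\<And>i. i \<le> d \<Longrightarrow> y1 $ i = (if i = d then 0 else y $ i)"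
    and "A_equiv (fps_X ^ v0, y) (fps_X ^ v0, y1)"
proof -
  define T where "T = Abs_fps (\<lambda>i. if i = d then 0 else y $ i)"
  obtain z where zr: "z oo rho beta0 = y"
    and zT: "\<And>i. i \<le> d \<Longrightarrow> i \<notin> M \<Longrightarrow> z $ i = (if i = d then 0 else y $ i)"
    using reparam_normal_form by blast
  have zy: "\<And>i. i < d \<Longrightarrow> i \<notin> M \<Longrightarrow> z $ i = y $ i" using zT by simp
  have "\<And>i. i \<le> d \<Longrightarrow> i \<notin> M \<Longrightarrow> z $ i = T $ i" using zT by (simp add: T_def)
  then obtain U V where adm: "admissible U V" and UV: "\<And>i. i \<le> d \<Longrightarrow> contact z U V $ i = T $ i"
    using contact_elimination[OF zy] by blast
  have "A_equiv (fps_X ^ v0, y) (fps_X ^ v0, contact z U V)"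
    unfolding contact_def
    using adm v0_pos y0 conv1_rho[OF assms] rho0 rho1 X_power_v0_compose_rho zr
    by (intro A_equiv_by_contact[of "fps_X ^ v0" y _ beta0 z d]) (auto simp: admissible_def)
  moreover have "\<And>i. i \<le> d \<Longrightarrow> contact z U V $ i = (if i = d then 0 else y $ i)"
    using UV by (simp add: T_def)
  ultimately show ?thesis using that by blast
qed

lemma normal_form_equiv:
  assumes "conv1 y"
  shows "\<exists>y1 :: complex fps.
           (\<forall>i<lam. i \<noteq> v1 \<longrightarrow> y1 $ i = 0) \<and> y1 $ v1 = 1 \<and> y1 $ lam = 1 \<and>
           (\<forall>i. i < v1 + lam - v0 \<longrightarrow> y1 $ i = y $ i) \<and> y1 $ (v1 + lam - v0) = 0 \<and>
           A_equiv (fps_X ^ v0, y) (fps_X ^ v0, y1)"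
proof -
  obtain y1 where y1: "\<And>i. i \<le> d \<Longrightarrow> y1 $ i = (if i = d then 0 else y $ i)"
    and equiv: "A_equiv (fps_X ^ v0, y) (fps_X ^ v0, y1)"
    using remove_coefficient_d[OF assms] by blast
  have agree: "y1 $ i = y $ i" if "i < d" for i using y1 that by simp
  have "\<forall>i<lam. i \<noteq> v1 \<longrightarrow> y1 $ i = 0"
    using agree lam_less_d y_below_v1 y_between by (metis less_trans linorder_neqE_nat)
  then show ?thesis
    using agree[of v1] agree[of lam] y1[of d] agree equiv lam_less_d v1_less_lam y_v1 y_lam
    by (intro exI[of _ y1]) (auto simp: d_def)
qed

end

lemma n1_two_shape:
  fixes v0 v1 :: nat
  assumes n1: "v0 div gcd v0 v1 = 2" and "v0 < v1"
  obtains e m where "e > 0" "v0 = 2 * e" "v1 = m * e" "odd m" "m \<ge> 3"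
proof
  define e where "e = gcd v0 v1"
  show e_pos: "e > 0" using n1 unfolding e_def by (metis div_by_0 gr0I zero_neq_numeral)
  show v0e: "v0 = 2 * e" using n1 unfolding e_def by (metis dvd_mult_div_cancel gcd_dvd1 mult.commute)
  show v1e: "v1 = (v1 div e) * e" unfolding e_def by simp
  have "e * gcd 2 (v1 div e) = e * 1"
    by (metis e_def v0e v1e gcd_mult_distrib_nat mult.commute mult_1_right)
  then have "gcd 2 (v1 div e) = 1" using e_pos by simp
  then show modd: "odd (v1 div e)"
    by (metis dvd_refl gcd_nat.absorb1 numeral_One num.distinct(1) numeral_eq_iff gcd_greatest_iff)
  have "2 * e < (v1 div e) * e" using \<open>v0 < v1\<close> v0e v1e by simp
  then show "v1 div e \<ge> 3" using e_pos modd
    by (metis Suc_leI mult_less_cancel2 numeral_2_eq_2 numeral_3_eq_3 dvd_refl odd_numeral Suc_lessI)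
qed

theorem proposition5p1:
  fixes v0 v1 lam :: nat and y :: "complex fps"
  assumes "puiseux_param v0 v1 y"
    and "genus (fps_X ^ v0) y \<ge> 2"
    and "v0 div gcd v0 v1 = 2"
    and "zariski_exists (fps_X ^ v0) y"
    and "lam = zariski_inv v0 (fps_X ^ v0) y"
    and "v1 < lam"
    and "\<forall>i. v1 < i \<and> i < lam \<longrightarrow> fps_nth y i = 0"
    and "fps_nth y lam = 1"
  shows "\<exists>y1 :: complex fps.
           (\<forall>i<lam. i \<noteq> v1 \<longrightarrow> fps_nth y1 i = 0) \<and> fps_nth y1 v1 = 1 \<and> fps_nth y1 lam = 1 \<and>
           (\<forall>i. i < v1 + lam - v0 \<longrightarrow> fps_nth y1 i = fps_nth y i) \<and>
           fps_nth y1 (v1 + lam - v0) = 0 \<and>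
           A_equiv (fps_X ^ v0, y) (fps_X ^ v0, y1)"
proof -
  from assms(1) have conv: "conv1 y" and y_below: "\<And>i. i < v1 \<Longrightarrow> y $ i = 0"
    and "y $ v1 = 1" and "v0 < v1"
    unfolding puiseux_param_def by auto
  obtain e m where "e > 0" "v0 = 2 * e" "v1 = m * e" "odd m" "m \<ge> 3"
    using n1_two_shape[OF assms(3) \<open>v0 < v1\<close>] .
  then interpret puiseux_n1_two v0 v1 lam e m y
    using assms(6-8) y_below \<open>y $ v1 = 1\<close> by unfold_locales auto
  show ?thesis using normal_form_equiv[OF conv] .
qed

end
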